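(* Let $n \ge 1$ and $1 \le k \le n$. For the threshold function $T_k:\{0,1\}^n \to \{0,1\}$ defined by $T_k(x)=1$ if $|x| \ge k$ and $T_k(x)=0$ otherwise, the spectral sensitivity satisfies \[ \lambda(T_k) = \sqrt{k\,(n+1-k)}. \]
   Context: For $x\in\{0,1\}^n$, $|x|$ denotes the Hamming weight (number of ones) of $x$. For a Boolean function $f:\{0,1\}^n\to\{0,1\}$, the sensitivity graph of $f$ is the graph on vertex set $\{0,1\}^n$ in which $x$ and $y$ are adjacent if and only if $x$ and $y$ differ in exactly one coordinate and $f(x)\neq f(y)$. Let $A_f$ denote its adjacency matrix (a symmetric $0/1$ matrix indexed by $\{0,1\}^n$). The spectral sensitivity of $f$ is $\lambda(f)=\|A_f\| = \max_{v:\|v\|_2=1}\|A_f v\|_2$, the spectral norm of $A_f$ (equivalently its largest eigenvalue). *)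

theory Defs
  imports Complex_Main
begin

text \<open>The Boolean cube {0,1}^n is modelled as the set of subsets of {0..<n}:
  a point x corresponds to its support (set of coordinates equal to 1).
  Hamming weight |x| is card x; two points differ in exactly one coordinate
  iff their symmetric difference has exactly one element.\<close>

definition cube :: "nat \<Rightarrow> nat set set" where
  "cube n = Pow {..<n}"

definition hamming_weight :: "nat set \<Rightarrow> nat" where
  "hamming_weight x = card x"

definition sens_adj :: "(nat set \<Rightarrow> bool) \<Rightarrow> nat set \<Rightarrow> nat set \<Rightarrow> bool" where
  "sens_adj f x y \<longleftrightarrow> card ((x - y) \<union> (y - x)) = 1 \<and> f x \<noteq> f y"

definition adj_matrix :: "nat \<Rightarrow> (nat set \<Rightarrow> bool) \<Rightarrow> nat set \<Rightarrow> nat set \<Rightarrow> real" where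
  "adj_matrix n f x y = (if x \<in> cube n \<and> y \<in> cube n \<and> sens_adj f x y then 1 else 0)"

definition mat_vec :: "nat \<Rightarrow> (nat set \<Rightarrow> nat set \<Rightarrow> real) \<Rightarrow> (nat set \<Rightarrow> real) \<Rightarrow> nat set \<Rightarrow> real" where
  "mat_vec n A v x = (\<Sum>y\<in>cube n. A x y * v y)"

definition l2norm :: "nat \<Rightarrow> (nat set \<Rightarrow> real) \<Rightarrow> real" where
  "l2norm n v = sqrt (\<Sum>x\<in>cube n. (v x)\<^sup>2)"

definition spectral_norm :: "nat \<Rightarrow> (nat set \<Rightarrow> nat set \<Rightarrow> real) \<Rightarrow> real" where
  "spectral_norm n A = Sup {l2norm n (mat_vec n A v) | v. l2norm n v = 1}"

definition spectral_sensitivity :: "nat \<Rightarrow> (nat set \<Rightarrow> bool) \<Rightarrow> real" where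
  "spectral_sensitivity n f = spectral_norm n (adj_matrix n f)"

definition threshold :: "nat \<Rightarrow> nat set \<Rightarrow> bool" where
  "threshold k x \<longleftrightarrow> hamming_weight x \<ge> k"

end

theory Submission
  imports Defs "HOL-Analysis.Convex"
begin

text \<open>The sensitivity graph of the threshold function only joins level \<open>k - 1\<close> to level \<open>k\<close>
  of the cube, so it is bipartite and biregular: a vertex of weight \<open>k\<close> has \<open>k\<close> neighbours
  (remove one of its ones), a vertex of weight \<open>k - 1\<close> has \<open>n + 1 - k\<close> (add a one).
  For a biregular bipartite graph with degrees \<open>a\<close> and \<open>b\<close>, Cauchy--Schwarz weighted by the
  degrees (the Schur test) bounds the spectral norm by \<open>sqrt (a * b)\<close>, and the vector equal to
  \<open>sqrt a\<close> on one side and \<open>sqrt b\<close> on the other attains this bound.\<close>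

lemma weighted_Cauchy_Schwarz_sum:
  fixes w u :: "'a \<Rightarrow> real"
  assumes "\<And>i. i \<in> I \<Longrightarrow> 0 \<le> w i"
  shows "(\<Sum>i\<in>I. w i * u i)\<^sup>2 \<le> (\<Sum>i\<in>I. w i) * (\<Sum>i\<in>I. w i * (u i)\<^sup>2)"
proof -
  have "(\<Sum>i\<in>I. w i * u i) = (\<Sum>i\<in>I. sqrt (w i) * (sqrt (w i) * u i))"
    using assms by (intro sum.cong) (auto simp flip: mult.assoc)
  also have "(\<dots>)\<^sup>2 \<le> (\<Sum>i\<in>I. (sqrt (w i))\<^sup>2) * (\<Sum>i\<in>I. (sqrt (w i) * u i)\<^sup>2)"
    by (rule Cauchy_Schwarz_ineq_sum)
  also have "\<dots> = (\<Sum>i\<in>I. w i) * (\<Sum>i\<in>I. w i * (u i)\<^sup>2)"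
    using assms by (simp add: power_mult_distrib)
  finally show ?thesis .
qed

lemma Schur_test:
  fixes A :: "'a \<Rightarrow> 'a \<Rightarrow> real"
  assumes nonneg: "\<And>x y. x \<in> V \<Longrightarrow> y \<in> V \<Longrightarrow> 0 \<le> A x y"
    and col: "\<And>y. y \<in> V \<Longrightarrow> (\<Sum>x\<in>V. A x y * (\<Sum>z\<in>V. A x z)) \<le> c"
  shows "(\<Sum>x\<in>V. (\<Sum>y\<in>V. A x y * v y)\<^sup>2) \<le> c * (\<Sum>y\<in>V. (v y)\<^sup>2)"
proof -
  have "(\<Sum>x\<in>V. (\<Sum>y\<in>V. A x y * v y)\<^sup>2) \<le>
      (\<Sum>x\<in>V. (\<Sum>z\<in>V. A x z) * (\<Sum>y\<in>V. A x y * (v y)\<^sup>2))"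
    by (intro sum_mono weighted_Cauchy_Schwarz_sum) (simp add: nonneg)
  also have "\<dots> = (\<Sum>y\<in>V. (v y)\<^sup>2 * (\<Sum>x\<in>V. A x y * (\<Sum>z\<in>V. A x z)))"
    unfolding sum_distrib_left sum_distrib_right by (subst sum.swap) (simp add: mult_ac)
  also have "\<dots> \<le> (\<Sum>y\<in>V. (v y)\<^sup>2 * c)"
    by (intro sum_mono mult_left_mono col) auto
  finally show ?thesis
    by (simp add: sum_distrib_left mult.commute)
qed

lemma l2norm_nonneg: "0 \<le> l2norm n v"
  by (simp add: l2norm_def sum_nonneg)

lemma l2norm_scale: "l2norm n (\<lambda>x. t * v x) = \<bar>t\<bar> * l2norm n v"
  by (simp add: l2norm_def power_mult_distrib real_sqrt_mult flip: sum_distrib_left)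

lemma mat_vec_scale: "mat_vec n A (\<lambda>x. t * v x) = (\<lambda>x. t * mat_vec n A v x)"
  by (rule ext) (simp add: mat_vec_def sum_distrib_left mult_ac)

lemma spectral_norm_eqI:
  assumes bound: "\<And>v. l2norm n (mat_vec n A v) \<le> c * l2norm n v"
    and "l2norm n v\<^sub>0 \<noteq> 0" and "l2norm n (mat_vec n A v\<^sub>0) = c * l2norm n v\<^sub>0"
  shows "spectral_norm n A = c"
proof -
  define u where "u = (\<lambda>x. inverse (l2norm n v\<^sub>0) * v\<^sub>0 x)"
  have "l2norm n u = 1" "l2norm n (mat_vec n A u) = c"
    using assms(2,3) l2norm_nonneg[of n v\<^sub>0]
    by (simp_all add: u_def l2norm_scale mat_vec_scale)
  then have "c \<in> {l2norm n (mat_vec n A v) | v. l2norm n v = 1}"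
    by blast
  moreover have "s \<le> c" if s: "s \<in> {l2norm n (mat_vec n A v) | v. l2norm n v = 1}" for s
  proof -
    obtain v where "s = l2norm n (mat_vec n A v)" "l2norm n v = 1"
      using s by blast
    then show ?thesis
      using bound[of v] by simp
  qed
  ultimately show ?thesis
    unfolding spectral_norm_def by (rule cSup_eq_maximum)
qed

definition two_level :: "'a set \<Rightarrow> 'a set \<Rightarrow> real \<Rightarrow> real \<Rightarrow> 'a \<Rightarrow> real" where
  "two_level L U p q x = (if x \<in> L then p else if x \<in> U then q else 0)"

lemma sum_two_level:
  fixes f :: "real \<Rightarrow> real"
  assumes "finite V" "L \<subseteq> V" "U \<subseteq> V" "L \<inter> U = {}" "f 0 = 0"
  shows "(\<Sum>x\<in>V. f (two_level L U p q x)) = real (card L) * f p + real (card U) * f q"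
proof -
  have "(\<Sum>x\<in>V. f (two_level L U p q x)) = (\<Sum>x\<in>L \<union> U. f (two_level L U p q x))"
    using assms by (intro sum.mono_neutral_cong_right) (auto simp: two_level_def)
  also have "\<dots> = (\<Sum>x\<in>L. f (two_level L U p q x)) + (\<Sum>x\<in>U. f (two_level L U p q x))"
    using assms by (intro sum.union_disjoint) (auto intro: finite_subset)
  also have "\<dots> = (\<Sum>x\<in>L. f p) + (\<Sum>x\<in>U. f q)"
    using assms(4) by (intro arg_cong2[where f = "(+)"] sum.cong) (auto simp: two_level_def)
  finally show ?thesis by simp
qed

locale biregular_bipartite =
  fixes n :: nat and A :: "nat set \<Rightarrow> nat set \<Rightarrow> real" and L U :: "nat set set" and a b :: real
  assumes nonneg: "\<And>x y. 0 \<le> A x y"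
    and sym: "\<And>x y. A x y = A y x"
    and L_subset: "L \<subseteq> cube n" and U_subset: "U \<subseteq> cube n"
    and U_nonempty: "U \<noteq> {}" and disjoint: "L \<inter> U = {}"
    and edges: "\<And>x y. x \<in> cube n \<Longrightarrow> y \<in> cube n \<Longrightarrow> A x y \<noteq> 0 \<Longrightarrow>
      x \<in> L \<and> y \<in> U \<or> x \<in> U \<and> y \<in> L"
    and deg_L: "\<And>x. x \<in> L \<Longrightarrow> (\<Sum>y\<in>cube n. A x y) = a"
    and deg_U: "\<And>x. x \<in> U \<Longrightarrow> (\<Sum>y\<in>cube n. A x y) = b"
    and a_pos: "0 < a" and b_pos: "0 < b"
begin

lemma sum_two_level_cube:
  "f 0 = 0 \<Longrightarrow> (\<Sum>x\<in>cube n. f (two_level L U p q x)) = real (card L) * f p + real (card U) * f q"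
  using sum_two_level[OF _ L_subset U_subset disjoint] by (simp add: cube_def)

lemma row_sum: "x \<in> cube n \<Longrightarrow> (\<Sum>y\<in>cube n. A x y) = two_level L U a b x"
  using deg_L deg_U disjoint edges by (force simp: two_level_def intro: sum.neutral)

text \<open>Swapping \<open>p\<close> and \<open>q\<close> reflects that the endpoints of an edge lie on opposite sides.\<close>

lemma edge_two_level:
  "x \<in> cube n \<Longrightarrow> y \<in> cube n \<Longrightarrow> A x y * two_level L U p q y = A x y * two_level L U q p x"
  using edges[of x y] disjoint by (cases "A x y = 0") (auto simp: two_level_def)

lemma mat_vec_two_level:
  assumes "x \<in> cube n"
  shows "mat_vec n A (two_level L U p q) x = two_level L U (a * q) (b * p) x"
proof -
  have "mat_vec n A (two_level L U p q) x = (\<Sum>y\<in>cube n. A x y) * two_level L U q p x"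
    unfolding mat_vec_def sum_distrib_right
    by (rule sum.cong[OF refl]) (rule edge_two_level[OF assms])
  then show ?thesis
    using assms row_sum by (simp add: two_level_def)
qed

lemma l2norm_mat_vec_le: "l2norm n (mat_vec n A v) \<le> sqrt (a * b) * l2norm n v"
proof -
  have "(\<Sum>x\<in>cube n. A x y * (\<Sum>z\<in>cube n. A x z)) \<le> a * b" if y: "y \<in> cube n" for y
  proof -
    have "(\<Sum>x\<in>cube n. A x y * (\<Sum>z\<in>cube n. A x z)) = mat_vec n A (two_level L U a b) y"
      unfolding mat_vec_def by (intro sum.cong) (auto simp: row_sum sym)
    also have "\<dots> \<le> a * b"
      using y a_pos b_pos by (simp add: mat_vec_two_level two_level_def mult.commute)
    finally show ?thesis .
  qed
  then have "(\<Sum>x\<in>cube n. (mat_vec n A v x)\<^sup>2) \<le> a * b * (\<Sum>x\<in>cube n. (v x)\<^sup>2)"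
    unfolding mat_vec_def by (intro Schur_test nonneg)
  then show ?thesis
    unfolding l2norm_def by (metis real_sqrt_le_mono real_sqrt_mult)
qed

lemma l2norm_two_level_sqrt_neq_0: "l2norm n (two_level L U (sqrt a) (sqrt b)) \<noteq> 0"
proof -
  have "card U > 0"
    using U_subset U_nonempty by (simp add: cube_def card_gt_0_iff finite_subset)
  then have "0 < real (card L) * a + real (card U) * b"
    using a_pos b_pos by (simp add: add_nonneg_pos)
  then show ?thesis
    using a_pos b_pos sum_two_level_cube[of "\<lambda>t. t\<^sup>2"] by (simp add: l2norm_def)
qed

lemma l2norm_mat_vec_two_level_sqrt:
  "l2norm n (mat_vec n A (two_level L U (sqrt a) (sqrt b))) =
    sqrt (a * b) * l2norm n (two_level L U (sqrt a) (sqrt b))"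
proof -
  let ?v = "two_level L U (sqrt a) (sqrt b)"
  have "(\<Sum>x\<in>cube n. (mat_vec n A ?v x)\<^sup>2) =
      real (card L) * (a * sqrt b)\<^sup>2 + real (card U) * (b * sqrt a)\<^sup>2"
    using sum_two_level_cube[of "\<lambda>t. t\<^sup>2"] by (simp add: mat_vec_two_level)
  also have "\<dots> = a * b * (real (card L) * (sqrt a)\<^sup>2 + real (card U) * (sqrt b)\<^sup>2)"
    using a_pos b_pos by (simp add: power_mult_distrib algebra_simps power2_eq_square)
  also have "\<dots> = a * b * (\<Sum>x\<in>cube n. (?v x)\<^sup>2)"
    using sum_two_level_cube[of "\<lambda>t. t\<^sup>2"] by simp
  finally show ?thesis
    by (simp add: l2norm_def real_sqrt_mult)
qed

theorem spectral_norm_eq: "spectral_norm n A = sqrt (a * b)"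
  using l2norm_mat_vec_le l2norm_two_level_sqrt_neq_0 l2norm_mat_vec_two_level_sqrt
  by (rule spectral_norm_eqI)

end

lemma card_sym_diff_eq_1_iff:
  "card (sym_diff x y) = 1 \<longleftrightarrow> (\<exists>i\<in>x. y = x - {i}) \<or> (\<exists>i. i \<notin> x \<and> y = insert i x)"
proof
  assume "card (sym_diff x y) = 1"
  then obtain i where "sym_diff x y = {i}" by (auto simp: card_1_singleton_iff)
  then have "\<And>z. z \<in> y \<longleftrightarrow> (z \<in> x \<longleftrightarrow> z \<noteq> i)" by (metis Diff_iff Un_iff singleton_iff)
  then show "(\<exists>i\<in>x. y = x - {i}) \<or> (\<exists>i. i \<notin> x \<and> y = insert i x)" by blast
next
  assume "(\<exists>i\<in>x. y = x - {i}) \<or> (\<exists>i. i \<notin> x \<and> y = insert i x)"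
  then have "\<exists>i. sym_diff x y = {i}" by blast
  then show "card (sym_diff x y) = 1" by auto
qed

lemma sens_adj_threshold_iff:
  assumes "1 \<le> k" and "finite x"
  shows "sens_adj (threshold k) x y \<longleftrightarrow>
    card x = k \<and> (\<exists>i\<in>x. y = x - {i}) \<or> card x = k - 1 \<and> (\<exists>i. i \<notin> x \<and> y = insert i x)"
  unfolding sens_adj_def threshold_def hamming_weight_def card_sym_diff_eq_1_iff
  using assms by (auto simp: card_Diff_singleton card_insert_if)

lemma sens_adj_threshold_levels:
  assumes "1 \<le> k" and "x \<in> cube n" and "sens_adj (threshold k) x y"
  shows "card x = k \<and> card y = k - 1 \<or> card x = k - 1 \<and> card y = k"
proof -
  have "finite x"
    using assms(2) by (auto simp: cube_def intro: finite_subset)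
  then show ?thesis
    using assms(1,3) by (auto simp: sens_adj_threshold_iff card_insert_if)
qed

lemma sens_adj_commute: "sens_adj f x y \<longleftrightarrow> sens_adj f y x"
  by (auto simp: sens_adj_def Un_commute)

lemma sum_adj_matrix_eq_card:
  "(\<Sum>y\<in>cube n. adj_matrix n f x y) = real (card {y \<in> cube n. sens_adj f x y})" if "x \<in> cube n"
  using that by (simp add: adj_matrix_def sum.If_cases cube_def Int_def)

lemma threshold_degree:
  assumes "1 \<le> k" and x: "x \<in> cube n"
  shows "(\<Sum>y\<in>cube n. adj_matrix n (threshold k) x y) =
    (if card x = k then real k else if card x = k - 1 then real (n + 1 - k) else 0)"
proof -
  have xn: "x \<subseteq> {..<n}" and fin: "finite x"
    using x by (auto simp: cube_def intro: finite_subset)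
  have "{y \<in> cube n. sens_adj (threshold k) x y} =
    (if card x = k then (\<lambda>i. x - {i}) ` x
     else if card x = k - 1 then (\<lambda>i. insert i x) ` ({..<n} - x) else {})"
    using xn sens_adj_threshold_iff[OF assms(1) fin] assms(1) by (auto simp: cube_def)
  moreover have "inj_on (\<lambda>i. x - {i}) x" "inj_on (\<lambda>i. insert i x) ({..<n} - x)"
    by (auto simp: inj_on_def)
  moreover have "card ({..<n} - x) = n + 1 - k" if "card x = k - 1"
    using xn fin that assms(1) by (simp add: card_Diff_subset)
  ultimately show ?thesis
    using x by (simp add: sum_adj_matrix_eq_card card_image)
qed

theorem mainTheorem1:
  fixes n k :: nat
  assumes "1 \<le> n" and "1 \<le> k" and "k \<le> n"
  shows "spectral_sensitivity n (threshold k) = sqrt (real (k * (n + 1 - k)))"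
proof -
  define L where "L = {x \<in> cube n. card x = k - 1}"
  define U where "U = {x \<in> cube n. card x = k}"
  have "{..<k} \<in> U"
    using \<open>k \<le> n\<close> by (auto simp: U_def cube_def)
  then interpret biregular_bipartite n "adj_matrix n (threshold k)" L U "real (n + 1 - k)" "real k"
    using \<open>1 \<le> k\<close> \<open>k \<le> n\<close> threshold_degree[OF \<open>1 \<le> k\<close>]
    by unfold_locales
      (auto simp: L_def U_def adj_matrix_def sens_adj_commute split: if_splits
        dest: sens_adj_threshold_levels[OF \<open>1 \<le> k\<close>])
  show ?thesis
    using spectral_norm_eq by (simp add: spectral_sensitivity_def mult.commute)
qed

end
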